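(* Let $(G,t)$ be an infinite biosphere. Then: (1) $\mathrm{CONV}$ is downward generic; (2) $\mathrm{CONV}\cap\mathrm{REF}$ is downward generic; (3) $\mathrm{IAP}$ is downward generic.
   Context: An infinite biosphere is a directed graph $G$ together with a function $t$ assigning a real number $t(v)$ to each vertex, such that: (1) if $v$ is a parent of $w$ (edge from $v$ to $w$) then $t(v)<t(w)$; (2) for every $r\in\mathbb R$ at most finitely many vertices $v$ have $t(v)<r$; (3) every vertex has finitely many children; (4) $G$ is infinite. $v$ is an ancestor of $w$ (and $w$ a descendant of $v$) if there is a directed path $v=v_1,\dots,v_n=w$ with $n>1$. A $G$-subset is a set of vertices. $\mathrm{IAP}$ is the set of $G$-subsets $S$ such that no $v\in S$ has both infinitely many descendants in $S$ and infinitely many non-descendants in $S$. $\mathrm{CONV}$ is the set of $G$-subsets $S$ such that every $v\in G$ having an ancestor in $S$ and a descendant in $S$ lies in $S$. $\mathrm{REF}$ is the set of $G$-subsets $S$ such that every $v\in S$ which has infinitely many descendants in $G$ has infinitely many descendants in $S$. For a nonempty linear order $(X,<)$, a descending chain of $G$-subsets indexed by $X$ is a family $\{C_\alpha\}_{\alpha\in X}$ with $C_\beta\subseteq C_\alpha$ whenever $\alpha<\beta$. A set $T$ of $G$-subsets is downward generic if for every descending chain $\{C_\alpha\}_{\alpha\in X}$ of nonempty $G$-subsets with each $C_\alpha\in T$, $\bigcap_\alpha C_\alpha\in T$. *)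

theory Defs
  imports Complex_Main
begin

definition infinite_biosphere :: "'a set \<Rightarrow> ('a \<times> 'a) set \<Rightarrow> ('a \<Rightarrow> real) \<Rightarrow> bool" where
  "infinite_biosphere V E t \<longleftrightarrow>
     E \<subseteq> V \<times> V \<and>
     (\<forall>(v, w) \<in> E. t v < t w) \<and>
     (\<forall>r::real. finite {v \<in> V. t v < r}) \<and>
     (\<forall>v \<in> V. finite {w. (v, w) \<in> E}) \<and>
     infinite V"

definition descendants :: "('a \<times> 'a) set \<Rightarrow> 'a \<Rightarrow> 'a set" where
  "descendants E v = {w. (v, w) \<in> E\<^sup>+}"

definition IAP :: "'a set \<Rightarrow> ('a \<times> 'a) set \<Rightarrow> 'a set set" where
  "IAP V E = {S. S \<subseteq> V \<and>
     (\<forall>v \<in> S. \<not> (infinite (descendants E v \<inter> S) \<and> infinite (S - descendants E v)))}"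

definition CONV :: "'a set \<Rightarrow> ('a \<times> 'a) set \<Rightarrow> 'a set set" where
  "CONV V E = {S. S \<subseteq> V \<and>
     (\<forall>v \<in> V. (\<exists>a \<in> S. (a, v) \<in> E\<^sup>+) \<and> (\<exists>d \<in> S. (v, d) \<in> E\<^sup>+) \<longrightarrow> v \<in> S)}"

definition REF :: "'a set \<Rightarrow> ('a \<times> 'a) set \<Rightarrow> 'a set set" where
  "REF V E = {S. S \<subseteq> V \<and>
     (\<forall>v \<in> S. infinite (descendants E v) \<longrightarrow> infinite (descendants E v \<inter> S))}"

definition strict_linear_order_on :: "'i set \<Rightarrow> ('i \<Rightarrow> 'i \<Rightarrow> bool) \<Rightarrow> bool" where
  "strict_linear_order_on X lt \<longleftrightarrow>
     (\<forall>x \<in> X. \<not> lt x x) \<and>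
     (\<forall>x \<in> X. \<forall>y \<in> X. \<forall>z \<in> X. lt x y \<and> lt y z \<longrightarrow> lt x z) \<and>
     (\<forall>x \<in> X. \<forall>y \<in> X. x \<noteq> y \<longrightarrow> lt x y \<or> lt y x)"

text \<open>Downward genericity, with index linear orders (X, lt) carried by the type 'i
  (the theorem is stated for an arbitrary type 'i).\<close>
definition downward_generic :: "'i itself \<Rightarrow> 'a set set \<Rightarrow> bool" where
  "downward_generic _ T \<longleftrightarrow>
     (\<forall>(X::'i set) lt (C::'i \<Rightarrow> 'a set).
        X \<noteq> {} \<and> strict_linear_order_on X lt \<and>
        (\<forall>\<alpha> \<in> X. \<forall>\<beta> \<in> X. lt \<alpha> \<beta> \<longrightarrow> C \<beta> \<subseteq> C \<alpha>) \<and>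
        (\<forall>\<alpha> \<in> X. C \<alpha> \<noteq> {} \<and> C \<alpha> \<in> T)
        \<longrightarrow> (\<Inter>\<alpha> \<in> X. C \<alpha>) \<in> T)"

end

theory Submission
  imports Defs
begin

text \<open>CONV is closed under arbitrary nonempty intersections and IAP even under subsets, so for
  these two the chain structure is irrelevant. For CONV \<inter> REF, suppose v lies in the
  intersection S of the chain but has only finitely many descendants in S, and choose a level r
  above the times of v and of all of them. Every member C of the chain contains infinitely many
  descendants of v, hence one at time \<ge> r, and by convexity of C also a vertex at which a path
  from v to it crosses the level r. These crossing vertices form a finite set (children of
  the finitely many vertices below r), and a finite set met by every member of a descending chain
  is met by its intersection: a contradiction.\<close>

lemma chain_Inter_meets_finite:
  assumes "X \<noteq> {}" and "strict_linear_order_on X lt"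
    and desc: "\<forall>\<alpha> \<in> X. \<forall>\<beta> \<in> X. lt \<alpha> \<beta> \<longrightarrow> C \<beta> \<subseteq> C \<alpha>"
    and "finite A" and meet: "\<forall>\<alpha> \<in> X. C \<alpha> \<inter> A \<noteq> {}"
  shows "(\<Inter>\<alpha> \<in> X. C \<alpha>) \<inter> A \<noteq> {}"
proof -
  obtain a where aX: "a \<in> X" and a_min: "\<And>b. b \<in> X \<Longrightarrow> card (C a \<inter> A) \<le> card (C b \<inter> A)"
    using ex_has_least_nat[of "\<lambda>b. b \<in> X" _ "\<lambda>b. card (C b \<inter> A)"] \<open>X \<noteq> {}\<close> by blast
  have "C a \<inter> A \<subseteq> C b" if bX: "b \<in> X" for b
  proof -
    consider "b = a" | "lt b a" | "lt a b"
      using \<open>strict_linear_order_on X lt\<close> aX bX unfolding strict_linear_order_on_def by blast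
    then show ?thesis
    proof cases
      case 3
      then have "C b \<inter> A \<subseteq> C a \<inter> A" using desc aX bX by blast
      with a_min[OF bX] \<open>finite A\<close> have "C b \<inter> A = C a \<inter> A"
        by (meson card_seteq finite_Int)
      then show ?thesis by blast
    qed (use desc aX bX in blast)+
  qed
  then have "C a \<inter> A \<subseteq> (\<Inter>\<alpha> \<in> X. C \<alpha>) \<inter> A" by blast
  with meet aX show ?thesis by blast
qed

lemma downward_genericI:
  assumes "\<And>(X :: 'i set) lt C. X \<noteq> {} \<Longrightarrow> strict_linear_order_on X lt \<Longrightarrow>
      \<forall>\<alpha> \<in> X. \<forall>\<beta> \<in> X. lt \<alpha> \<beta> \<longrightarrow> C \<beta> \<subseteq> C \<alpha> \<Longrightarrow> \<forall>\<alpha> \<in> X. C \<alpha> \<in> T \<Longrightarrow>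
      (\<Inter>\<alpha> \<in> X. C \<alpha>) \<in> T"
  shows "downward_generic TYPE('i) T"
  unfolding downward_generic_def by (blast intro: assms)

lemma CONV_Inter:
  assumes "X \<noteq> {}" and "\<forall>\<alpha> \<in> X. C \<alpha> \<in> CONV V E"
  shows "(\<Inter>\<alpha> \<in> X. C \<alpha>) \<in> CONV V E"
  unfolding CONV_def
proof (intro CollectI conjI ballI impI INT_I)
  show "(\<Inter>\<alpha> \<in> X. C \<alpha>) \<subseteq> V" using assms unfolding CONV_def by blast
next
  fix v \<alpha>
  assume "v \<in> V" and "\<alpha> \<in> X"
    and "(\<exists>a \<in> (\<Inter>\<alpha> \<in> X. C \<alpha>). (a, v) \<in> E\<^sup>+) \<and> (\<exists>d \<in> (\<Inter>\<alpha> \<in> X. C \<alpha>). (v, d) \<in> E\<^sup>+)"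
  then obtain a d where "a \<in> C \<alpha>" "(a, v) \<in> E\<^sup>+" "d \<in> C \<alpha>" "(v, d) \<in> E\<^sup>+" by blast
  moreover have "C \<alpha> \<in> CONV V E" using assms(2) \<open>\<alpha> \<in> X\<close> by blast
  ultimately show "v \<in> C \<alpha>" using \<open>v \<in> V\<close> unfolding CONV_def by blast
qed

lemma IAP_subset:
  assumes "T \<in> IAP V E" and "S \<subseteq> T"
  shows "S \<in> IAP V E"
proof -
  have "infinite (descendants E v \<inter> T) \<and> infinite (T - descendants E v)"
    if "infinite (descendants E v \<inter> S) \<and> infinite (S - descendants E v)" for v
    using that \<open>S \<subseteq> T\<close> by (meson Diff_mono Int_mono finite_subset subset_refl)
  with assms show ?thesis unfolding IAP_def by blast
qed

lemma IAP_Inter: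
  assumes "X \<noteq> {}" and "\<forall>\<alpha> \<in> X. C \<alpha> \<in> IAP V E"
  shows "(\<Inter>\<alpha> \<in> X. C \<alpha>) \<in> IAP V E"
  using assms IAP_subset by blast

lemma trancl_crosses_level:
  assumes "(v, w) \<in> E\<^sup>+" and "t v < r" and "r \<le> (t w :: real)"
  shows "\<exists>p u. (v, p) \<in> E\<^sup>* \<and> (p, u) \<in> E \<and> t p < r \<and> r \<le> t u \<and> (u, w) \<in> E\<^sup>*"
  using assms
proof (induction rule: trancl_induct)
  case (step y z)
  show ?case
  proof (cases "r \<le> t y")
    case True
    with step obtain p u where "(v, p) \<in> E\<^sup>*" "(p, u) \<in> E" "t p < r" "r \<le> t u" "(u, y) \<in> E\<^sup>*"
      by blast
    with \<open>(y, z) \<in> E\<close> show ?thesis by (meson rtrancl_into_rtrancl)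
  next
    case False
    with step show ?thesis by (meson not_le rtrancl_refl trancl_into_rtrancl)
  qed
qed blast

definition level_crossings :: "('a \<times> 'a) set \<Rightarrow> ('a \<Rightarrow> real) \<Rightarrow> real \<Rightarrow> 'a set" where
  "level_crossings E t r = {u. \<exists>p. (p, u) \<in> E \<and> t p < r \<and> r \<le> t u}"

lemma finite_level_crossings:
  assumes "infinite_biosphere V E t"
  shows "finite (level_crossings E t r)"
proof (rule finite_subset)
  show "level_crossings E t r \<subseteq> (\<Union>p \<in> {p \<in> V. t p < r}. {u. (p, u) \<in> E})"
    using assms unfolding infinite_biosphere_def level_crossings_def by blast
  show "finite (\<Union>p \<in> {p \<in> V. t p < r}. {u. (p, u) \<in> E})"
    using assms unfolding infinite_biosphere_def by auto
qed

lemma CONV_meets_level_crossings: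
  assumes "C \<in> CONV V E" and "E \<subseteq> V \<times> V"
    and "v \<in> C" and "w \<in> C" and "(v, w) \<in> E\<^sup>+" and "t v < r" and "r \<le> t w"
  shows "C \<inter> descendants E v \<inter> level_crossings E t r \<noteq> {}"
proof -
  obtain p u where vp: "(v, p) \<in> E\<^sup>*" and pu: "(p, u) \<in> E" and "t p < r" "r \<le> t u"
    and uw: "(u, w) \<in> E\<^sup>*"
    using trancl_crosses_level[OF assms(5-7)] by blast
  have vu: "(v, u) \<in> E\<^sup>+" using vp pu by (rule rtrancl_into_trancl1)
  have "u \<in> C"
  proof (cases "u = w")
    case False
    with uw have "(u, w) \<in> E\<^sup>+" by (meson rtranclD)
    moreover have "u \<in> V" using pu \<open>E \<subseteq> V \<times> V\<close> by blast
    ultimately show ?thesis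
      using \<open>C \<in> CONV V E\<close> \<open>v \<in> C\<close> \<open>w \<in> C\<close> vu unfolding CONV_def by blast
  qed (use \<open>w \<in> C\<close> in simp)
  moreover have "u \<in> level_crossings E t r"
    unfolding level_crossings_def using pu \<open>t p < r\<close> \<open>r \<le> t u\<close> by blast
  ultimately show ?thesis using vu unfolding descendants_def by blast
qed

lemma infinite_biosphere_exists_above:
  assumes "infinite_biosphere V E t" and "A \<subseteq> V" and "infinite A"
  obtains w where "w \<in> A" and "r \<le> t w"
proof -
  have "finite {v \<in> V. t v < r}" using assms(1) unfolding infinite_biosphere_def by blast
  then have "\<not> A \<subseteq> {v \<in> V. t v < r}" using \<open>infinite A\<close> finite_subset by blast
  then obtain w where "w \<in> A" and "\<not> t w < r" using \<open>A \<subseteq> V\<close> by blast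
  with that show ?thesis by simp
qed

lemma descendants_subset:
  assumes "E \<subseteq> V \<times> V"
  shows "descendants E v \<subseteq> V"
  using trancl_subset_Sigma[OF assms] unfolding descendants_def by blast

lemma CONV_REF_chain_Inter_REF:
  assumes bio: "infinite_biosphere V E t"
    and "X \<noteq> {}" and "strict_linear_order_on X lt"
    and "\<forall>\<alpha> \<in> X. \<forall>\<beta> \<in> X. lt \<alpha> \<beta> \<longrightarrow> C \<beta> \<subseteq> C \<alpha>"
    and CONV: "\<forall>\<alpha> \<in> X. C \<alpha> \<in> CONV V E" and REF: "\<forall>\<alpha> \<in> X. C \<alpha> \<in> REF V E"
  shows "(\<Inter>\<alpha> \<in> X. C \<alpha>) \<in> REF V E"
proof -
  let ?S = "\<Inter>\<alpha> \<in> X. C \<alpha>"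
  have EV: "E \<subseteq> V \<times> V" using bio unfolding infinite_biosphere_def by blast
  have "infinite (descendants E v \<inter> ?S)" if "v \<in> ?S" and "infinite (descendants E v)" for v
  proof
    assume fin: "finite (descendants E v \<inter> ?S)"
    define r where "r = Max (t ` insert v (descendants E v \<inter> ?S)) + 1"
    have below_r: "t x < r" if "x \<in> insert v (descendants E v \<inter> ?S)" for x
    proof -
      have "t x \<le> Max (t ` insert v (descendants E v \<inter> ?S))"
        using fin that by (intro Max_ge) auto
      then show ?thesis unfolding r_def by linarith
    qed
    have meets: "\<forall>\<alpha> \<in> X. C \<alpha> \<inter> (descendants E v \<inter> level_crossings E t r) \<noteq> {}"
    proof
      fix \<alpha> assume "\<alpha> \<in> X"
      have "v \<in> C \<alpha>" using \<open>v \<in> ?S\<close> \<open>\<alpha> \<in> X\<close> by blast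
      have "C \<alpha> \<in> REF V E" using REF \<open>\<alpha> \<in> X\<close> by blast
      have "descendants E v \<inter> C \<alpha> \<subseteq> V" using descendants_subset[OF EV] by blast
      moreover have "infinite (descendants E v \<inter> C \<alpha>)"
        using \<open>C \<alpha> \<in> REF V E\<close> \<open>v \<in> C \<alpha>\<close> \<open>infinite (descendants E v)\<close>
        unfolding REF_def by blast
      ultimately obtain w where "w \<in> descendants E v \<inter> C \<alpha>" and "r \<le> t w"
        by (rule infinite_biosphere_exists_above[OF bio])
      then have "(v, w) \<in> E\<^sup>+" and "w \<in> C \<alpha>" unfolding descendants_def by auto
      have "t v < r" using below_r by simp
      have "C \<alpha> \<in> CONV V E" using CONV \<open>\<alpha> \<in> X\<close> by blast
      from CONV_meets_level_crossings[OF this EV \<open>v \<in> C \<alpha>\<close> \<open>w \<in> C \<alpha>\<close> \<open>(v, w) \<in> E\<^sup>+\<close>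
          \<open>t v < r\<close> \<open>r \<le> t w\<close>]
      show "C \<alpha> \<inter> (descendants E v \<inter> level_crossings E t r) \<noteq> {}"
        by (simp add: Int_assoc)
    qed
    have "finite (descendants E v \<inter> level_crossings E t r)"
      using finite_level_crossings[OF bio] by blast
    from chain_Inter_meets_finite[OF assms(2-4) this meets]
    obtain u where "u \<in> descendants E v \<inter> ?S" and "u \<in> level_crossings E t r"
      by blast
    then have "t u < r" and "r \<le> t u"
      using below_r unfolding level_crossings_def by auto
    then show False by simp
  qed
  moreover have "?S \<subseteq> V" using CONV \<open>X \<noteq> {}\<close> unfolding CONV_def by blast
  ultimately show ?thesis unfolding REF_def by blast
qed

theorem mainTheorem6:
  fixes V :: "'a set" and E :: "('a \<times> 'a) set" and t :: "'a \<Rightarrow> real"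
  assumes "infinite_biosphere V E t"
  shows "downward_generic TYPE('i) (CONV V E) \<and>
         downward_generic TYPE('i) (CONV V E \<inter> REF V E) \<and>
         downward_generic TYPE('i) (IAP V E)"
proof (intro conjI)
  show "downward_generic TYPE('i) (CONV V E)"
    by (rule downward_genericI) (simp add: CONV_Inter)
  show "downward_generic TYPE('i) (IAP V E)"
    by (rule downward_genericI) (simp add: IAP_Inter)
  show "downward_generic TYPE('i) (CONV V E \<inter> REF V E)"
  proof (rule downward_genericI)
    fix X :: "'i set" and lt C
    assume chain: "X \<noteq> {}" "strict_linear_order_on X lt"
        "\<forall>\<alpha> \<in> X. \<forall>\<beta> \<in> X. lt \<alpha> \<beta> \<longrightarrow> C \<beta> \<subseteq> C \<alpha>"
      and "\<forall>\<alpha> \<in> X. C \<alpha> \<in> CONV V E \<inter> REF V E"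
    then have "\<forall>\<alpha> \<in> X. C \<alpha> \<in> CONV V E" and "\<forall>\<alpha> \<in> X. C \<alpha> \<in> REF V E" by auto
    with CONV_Inter[OF \<open>X \<noteq> {}\<close>] CONV_REF_chain_Inter_REF[OF assms chain]
    show "(\<Inter>\<alpha> \<in> X. C \<alpha>) \<in> CONV V E \<inter> REF V E" by simp
  qed
qed

end
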